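(* Let $\varphi$ be an increasing submodular setfunction on a sigma-algebra $(J,\mathcal{B})$, continuous from above, with $\varphi(\emptyset)=0$. Let $\mathcal{A}\subseteq\mathcal{B}$ be a set-algebra generating $\mathcal{B}$ (as a sigma-algebra). Then for every $X\in\mathcal{B}$ and every $\varepsilon>0$ there exists $Y\in\mathcal{A}$ such that $\varphi(X\triangle Y)<\varepsilon$.
   Context: $\varphi$ is increasing if $X\subseteq Y$ implies $\varphi(X)\le\varphi(Y)$, submodular if $\varphi(X)+\varphi(Y)\ge\varphi(X\cap Y)+\varphi(X\cup Y)$ for all $X,Y\in\mathcal{B}$, and continuous from above if for every decreasing sequence $X_1\supseteq X_2\supseteq\dots$ in $\mathcal{B}$ we have $\varphi(\bigcap_nX_n)=\lim_n\varphi(X_n)$. $X\triangle Y$ is the symmetric difference. *)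

theory Defs
  imports "HOL-Analysis.Analysis"
begin

definition increasing_on :: "'a set set \<Rightarrow> ('a set \<Rightarrow> real) \<Rightarrow> bool" where
  "increasing_on M \<phi> \<longleftrightarrow> (\<forall>X\<in>M. \<forall>Y\<in>M. X \<subseteq> Y \<longrightarrow> \<phi> X \<le> \<phi> Y)"

definition submodular_on :: "'a set set \<Rightarrow> ('a set \<Rightarrow> real) \<Rightarrow> bool" where
  "submodular_on M \<phi> \<longleftrightarrow> (\<forall>X\<in>M. \<forall>Y\<in>M. \<phi> X + \<phi> Y \<ge> \<phi> (X \<inter> Y) + \<phi> (X \<union> Y))"

definition continuous_from_above_on :: "'a set set \<Rightarrow> ('a set \<Rightarrow> real) \<Rightarrow> bool" where
  "continuous_from_above_on M \<phi> \<longleftrightarrow>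
     (\<forall>X :: nat \<Rightarrow> 'a set. range X \<subseteq> M \<longrightarrow> decseq X \<longrightarrow>
        (\<lambda>n. \<phi> (X n)) \<longlonglongrightarrow> \<phi> (\<Inter>n. X n))"

end

theory Submission
  imports Defs
begin

(* The sets of B that can be approximated by sets of A in the pseudometric phi (X \<triangle> Y) form a
   sigma-algebra containing A, hence contain B.  Increasing and submodular with phi {} = 0 gives
   monotone subadditivity, which is the triangle inequality for that pseudometric and yields
   closure under complement and finite unions.  A countable union X of approximable sets is the
   limit of its finite partial unions U n, because continuity from above makes phi (X - U n)
   tend to 0. *)

definition approximable :: "'a set set \<Rightarrow> ('a set \<Rightarrow> real) \<Rightarrow> 'a set \<Rightarrow> bool" where
  "approximable A \<phi> X \<longleftrightarrow> (\<forall>e>0. \<exists>Y\<in>A. \<phi> (sym_diff X Y) < e)"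

lemma sym_diff_Un_subset: "sym_diff (X1 \<union> X2) (Y1 \<union> Y2) \<subseteq> sym_diff X1 Y1 \<union> sym_diff X2 Y2"
  by blast

lemma sym_diff_trans_subset: "sym_diff X Z \<subseteq> sym_diff X Y \<union> sym_diff Y Z"
  by blast

lemma sym_diff_Diff_Diff:
  assumes "X \<subseteq> J" "Y \<subseteq> J"
  shows "sym_diff (J - X) (J - Y) = sym_diff X Y"
  using assms by blast

locale submodular_set_function = algebra J B for J B +
  fixes \<phi> :: "'a set \<Rightarrow> real"
  assumes increasing: "increasing_on B \<phi>"
    and submodular: "submodular_on B \<phi>"
    and empty: "\<phi> {} = 0"
begin

lemma mono: "S \<in> B \<Longrightarrow> T \<in> B \<Longrightarrow> S \<subseteq> T \<Longrightarrow> \<phi> S \<le> \<phi> T"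
  using increasing unfolding increasing_on_def by blast

lemma nonneg: "S \<in> B \<Longrightarrow> 0 \<le> \<phi> S"
  using mono[of "{}" S] empty by simp

lemma subadditive:
  assumes "S \<in> B" "T \<in> B"
  shows "\<phi> (S \<union> T) \<le> \<phi> S + \<phi> T"
proof -
  have "\<phi> (S \<inter> T) + \<phi> (S \<union> T) \<le> \<phi> S + \<phi> T"
    using submodular assms unfolding submodular_on_def by blast
  moreover have "0 \<le> \<phi> (S \<inter> T)"
    using assms by (intro nonneg) auto
  ultimately show ?thesis by linarith
qed

lemma sym_diff_in_sets: "X \<in> B \<Longrightarrow> Y \<in> B \<Longrightarrow> sym_diff X Y \<in> B"
  by (intro Un Diff)

lemma le_add_if_subset_Un:
  assumes "Z \<in> B" "S \<in> B" "T \<in> B" "Z \<subseteq> S \<union> T"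
  shows "\<phi> Z \<le> \<phi> S + \<phi> T"
  using mono[of Z "S \<union> T"] subadditive[of S T] Un[of S T] assms by linarith

context
  fixes A :: "'a set set"
  assumes A: "algebra J A" "A \<subseteq> B"
begin

interpretation A: algebra J A by (fact A)

lemma approximable_basic: "X \<in> A \<Longrightarrow> approximable A \<phi> X"
  unfolding approximable_def using empty by force

lemma approximable_compl:
  assumes "X \<subseteq> J" "approximable A \<phi> X"
  shows "approximable A \<phi> (J - X)"
  unfolding approximable_def
proof (intro allI impI)
  fix e :: real assume "e > 0"
  then obtain Y where "Y \<in> A" "\<phi> (sym_diff X Y) < e"
    using assms(2) unfolding approximable_def by blast
  moreover have "sym_diff (J - X) (J - Y) = sym_diff X Y"
    using assms(1) A.sets_into_space[OF \<open>Y \<in> A\<close>] by (rule sym_diff_Diff_Diff)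
  ultimately show "\<exists>Y\<in>A. \<phi> (sym_diff (J - X) Y) < e"
    by (metis A.compl_sets)
qed

lemma approximable_Un:
  assumes "X1 \<in> B" "X2 \<in> B" "approximable A \<phi> X1" "approximable A \<phi> X2"
  shows "approximable A \<phi> (X1 \<union> X2)"
  unfolding approximable_def
proof (intro allI impI)
  fix e :: real assume "e > 0"
  then obtain Y1 Y2 where Y: "Y1 \<in> A" "\<phi> (sym_diff X1 Y1) < e / 2"
      "Y2 \<in> A" "\<phi> (sym_diff X2 Y2) < e / 2"
    using assms(3,4) unfolding approximable_def by (meson half_gt_zero)
  have "Y1 \<in> B" "Y2 \<in> B"
    using Y(1,3) A(2) by auto
  then have "\<phi> (sym_diff (X1 \<union> X2) (Y1 \<union> Y2)) \<le> \<phi> (sym_diff X1 Y1) + \<phi> (sym_diff X2 Y2)"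
    using assms(1,2) by (intro le_add_if_subset_Un sym_diff_Un_subset sym_diff_in_sets Un)
  with Y have "\<phi> (sym_diff (X1 \<union> X2) (Y1 \<union> Y2)) < e"
    by linarith
  moreover have "Y1 \<union> Y2 \<in> A"
    using Y by blast
  ultimately show "\<exists>Y\<in>A. \<phi> (sym_diff (X1 \<union> X2) Y) < e" ..
qed

lemma approximable_UN_lessThan:
  fixes X :: "nat \<Rightarrow> 'a set"
  assumes "\<And>i. X i \<in> B" "\<And>i. approximable A \<phi> (X i)"
  shows "approximable A \<phi> (\<Union>i<n. X i)"
proof (induction n)
  case 0
  show ?case using approximable_basic by simp
next
  case (Suc n)
  have "(\<Union>i<n. X i) \<in> B"
    using assms(1) by blast
  then have "approximable A \<phi> (X n \<union> (\<Union>i<n. X i))"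
    using Suc assms by (intro approximable_Un) auto
  then show ?case
    by (simp add: lessThan_Suc)
qed

lemma approximable_if_approximated:
  assumes "X \<in> B"
    and "\<And>e. e > 0 \<Longrightarrow> \<exists>Z\<in>B. approximable A \<phi> Z \<and> \<phi> (sym_diff X Z) < e"
  shows "approximable A \<phi> X"
  unfolding approximable_def
proof (intro allI impI)
  fix e :: real assume "e > 0"
  then have "e / 2 > 0"
    by simp
  then obtain Z where Z: "Z \<in> B" "approximable A \<phi> Z" "\<phi> (sym_diff X Z) < e / 2"
    using assms(2) by blast
  then obtain Y where Y: "Y \<in> A" "\<phi> (sym_diff Z Y) < e / 2"
    using \<open>e / 2 > 0\<close> unfolding approximable_def by blast
  have "Y \<in> B"
    using Y(1) A(2) by auto
  then have "\<phi> (sym_diff X Y) \<le> \<phi> (sym_diff X Z) + \<phi> (sym_diff Z Y)"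
    using assms(1) Z(1) by (intro le_add_if_subset_Un sym_diff_trans_subset sym_diff_in_sets)
  with Y Z have "\<phi> (sym_diff X Y) < e"
    by linarith
  with Y(1) show "\<exists>Y\<in>A. \<phi> (sym_diff X Y) < e" ..
qed

end

end

locale continuous_submodular_set_function = submodular_set_function J B \<phi> + sigma_algebra J B
  for J B \<phi> +
  assumes continuous: "continuous_from_above_on B \<phi>"
begin

lemma tendsto_Diff_UN_lessThan:
  fixes X :: "nat \<Rightarrow> 'a set"
  assumes "\<And>i. X i \<in> B"
  shows "(\<lambda>n. \<phi> ((\<Union>i. X i) - (\<Union>i<n. X i))) \<longlonglongrightarrow> 0"
proof -
  define D where "D n = (\<Union>i. X i) - (\<Union>i<n. X i)" for n
  have "range D \<subseteq> B"
    unfolding D_def using assms by blast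
  moreover have "decseq D"
    unfolding D_def decseq_def by auto
  ultimately have "(\<lambda>n. \<phi> (D n)) \<longlonglongrightarrow> \<phi> (\<Inter>n. D n)"
    using continuous unfolding continuous_from_above_on_def by blast
  moreover have "(\<Inter>n. D n) = {}"
    unfolding D_def by auto
  ultimately have "(\<lambda>n. \<phi> (D n)) \<longlonglongrightarrow> 0"
    using empty by simp
  then show ?thesis
    unfolding D_def .
qed

lemma approximable_UN:
  fixes X :: "nat \<Rightarrow> 'a set"
  assumes A: "algebra J A" "A \<subseteq> B"
    and X: "\<And>i. X i \<in> B" "\<And>i. approximable A \<phi> (X i)"
  shows "approximable A \<phi> (\<Union>i. X i)"
proof (rule approximable_if_approximated[OF A])
  show "(\<Union>i. X i) \<in> B" using X(1) by blast
next
  fix e :: real assume "e > 0"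
  then have "\<forall>\<^sub>F n in sequentially. \<phi> ((\<Union>i. X i) - (\<Union>i<n. X i)) < e"
    by (rule order_tendstoD(2)[OF tendsto_Diff_UN_lessThan[OF X(1)]])
  then obtain n where n: "\<phi> ((\<Union>i. X i) - (\<Union>i<n. X i)) < e"
    by (auto simp: eventually_sequentially)
  have "sym_diff (\<Union>i. X i) (\<Union>i<n. X i) = (\<Union>i. X i) - (\<Union>i<n. X i)"
    by blast
  with n have "\<phi> (sym_diff (\<Union>i. X i) (\<Union>i<n. X i)) < e"
    by simp
  moreover have "(\<Union>i<n. X i) \<in> B"
    using X(1) by blast
  moreover have "approximable A \<phi> (\<Union>i<n. X i)"
    using X by (rule approximable_UN_lessThan[OF A])
  ultimately show "\<exists>Z\<in>B. approximable A \<phi> Z \<and> \<phi> (sym_diff (\<Union>i. X i) Z) < e"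
    by blast
qed

lemma approximable_sigma_sets:
  assumes A: "algebra J A" "A \<subseteq> B"
    and "X \<in> sigma_sets J A"
  shows "approximable A \<phi> X"
proof -
  interpret A: algebra J A by (fact A(1))
  from assms(3) show ?thesis
  proof (induction rule: sigma_sets.induct)
    case (Basic X)
    then show ?case by (rule approximable_basic[OF A])
  next
    case Empty
    show ?case using approximable_basic[OF A A.empty_sets] .
  next
    case (Compl X)
    show ?case
      using sigma_sets_into_sp[OF A.space_closed Compl.hyps] Compl.IH
      by (rule approximable_compl[OF A])
  next
    case (Union X)
    have "X i \<in> B" for i
      using Union.hyps sigma_sets_subset[OF A(2)] by blast
    then show ?case
      using Union.IH by (rule approximable_UN[OF A])
  qed
qed

end

theorem lemma4p2:
  fixes J :: "'a set" and B A :: "'a set set" and \<phi> :: "'a set \<Rightarrow> real"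
  assumes "sigma_algebra J B"
    and "increasing_on B \<phi>"
    and "submodular_on B \<phi>"
    and "continuous_from_above_on B \<phi>"
    and "\<phi> {} = 0"
    and "algebra J A"
    and "A \<subseteq> B"
    and "sigma_sets J A = B"
  shows "\<forall>X\<in>B. \<forall>e::real. e > 0 \<longrightarrow> (\<exists>Y\<in>A. \<phi> ((X - Y) \<union> (Y - X)) < e)"
proof -
  interpret sigma_algebra J B by (fact assms(1))
  interpret continuous_submodular_set_function J B \<phi>
    using assms(2-5) by unfold_locales
  show ?thesis
    using approximable_sigma_sets[OF assms(6,7)] assms(8) unfolding approximable_def by blast
qed

end
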